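(* Let $\mathcal{X}$ be a sample space, $\mathcal{Y}$ a label set, and $y:\mathcal{X}\to\mathcal{Y}$ a deterministic labeling function. Let $p_{\mathrm{sim}}$ be a joint probability distribution on pairs $(x,x^+)\in\mathcal{X}\times\mathcal{X}$, and let $q_{\mathrm{UCL}}$ be a probability distribution on $\mathcal{X}$. Fix $\gamma\in(0,\infty)$, a representation function $f:\mathcal{X}\to S^{d-1}$ (unit sphere in $\mathbb{R}^d$), and set $g(x,x'):=f(x)^\top f(x')/\gamma$. Let $\eta:\mathbb{R}\to\mathbb{R}$ be a hardening function, i.e. nonnegative and nondecreasing on $\mathbb{R}$. For $x\in\mathcal{X}$ define $$\alpha_{\mathrm{H\text{-}UCL}}(x,f):=\mathbb{E}_{x^-\sim q_{\mathrm{UCL}}}[\eta(g(x,x^-))],$$ $$\alpha_{\mathrm{H\text{-}SCL}}(x,f):=\mathbb{E}_{x^-\sim q_{\mathrm{UCL}}}[1(y(x^-)\neq y(x))\,\eta(g(x,x^-))],$$ $$\alpha_{\mathrm{Hcol}}(x,f):=\mathbb{E}_{x^-\sim q_{\mathrm{UCL}}}[1(y(x^-)= y(x))\,\eta(g(x,x^-))],$$ and assume each of these lies in $(0,\infty)$ for all $x\in\mathcal{X}$. Define the conditional distributions $$q_{\mathrm{H\text{-}UCL}}(x^-|x,f)=\frac{\eta(g(x,x^-))\,q_{\mathrm{UCL}}(x^-)}{\alpha_{\mathrm{H\text{-}UCL}}(x,f)},\quad q_{\mathrm{H\text{-}SCL}}(x^-|x,f)=\frac{1(y(x^-)\neq y(x))\,\eta(g(x,x^-))\,q_{\mathrm{UCL}}(x^-)}{\alpha_{\mathrm{H\text{-}SCL}}(x,f)},$$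 $$q_{\mathrm{Hcol}}(x^-|x,f)=\frac{1(y(x^-)= y(x))\,\eta(g(x,x^-))\,q_{\mathrm{UCL}}(x^-)}{\alpha_{\mathrm{Hcol}}(x,f)}.$$ For a conditional negative-sampling distribution $q(\cdot|x)$ define the asymptotic InfoNCE loss $$\mathcal{L}^{(\infty)}_q(f):=\mathbb{E}_{(x,x^+)\sim p_{\mathrm{sim}}}\Big[\log\Big(1+e^{-g(x,x^+)}\,\mathbb{E}_{x^-\sim q(\cdot|x)}\big[e^{g(x,x^-)}\big]\Big)\Big],$$ and write $\mathcal{L}^{(\infty)}_{\mathrm{H\text{-}UCL}}(f)$ and $\mathcal{L}^{(\infty)}_{\mathrm{H\text{-}SCL}}(f)$ for this loss with $q=q_{\mathrm{H\text{-}UCL}}(\cdot|x,f)$ and $q=q_{\mathrm{H\text{-}SCL}}(\cdot|x,f)$ respectively. Suppose that for all $x\in\mathcal{X}$, $$\mathbb{E}_{x^-\sim q_{\mathrm{Hcol}}(\cdot|x,f)}\big[e^{g(x,x^-)}\big]\;\geq\;\mathbb{E}_{x^-\sim q_{\mathrm{H\text{-}SCL}}(\cdot|x,f)}\big[e^{g(x,x^-)}\big].$$ Then $\mathcal{L}^{(\infty)}_{\mathrm{H\text{-}UCL}}(f)\geq \mathcal{L}^{(\infty)}_{\mathrm{H\text{-}SCL}}(f)$.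
   Context: $1(\mathcal{E})$ denotes the indicator of event $\mathcal{E}$. The loss $\mathcal{L}^{(\infty)}_q(f)$ is the limit as $k\to\infty$ of the InfoNCE contrastive loss $\mathbb{E}_{(x,x^+)\sim p_{\mathrm{sim}}}\mathbb{E}_{x^-_{1:k}\text{ iid}\sim q(\cdot|x)}\big[\log\big(1+e^{-g(x,x^+)}\tfrac1k\sum_{j=1}^k e^{g(x,x^-_j)}\big)\big]$ with $k$ negative samples; $x$ is the anchor, $x^+$ the positive sample, $x^-$ negative samples. *)

theory Defs
  imports "HOL-Probability.Probability"
begin

definition sim :: "('a \<Rightarrow> 'v::euclidean_space) \<Rightarrow> real \<Rightarrow> 'a \<Rightarrow> 'a \<Rightarrow> real" where
  "sim f \<gamma> x x' = inner (f x) (f x') / \<gamma>"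

definition hardening :: "(real \<Rightarrow> real) \<Rightarrow> bool" where
  "hardening \<eta> \<longleftrightarrow> (\<forall>t. 0 \<le> \<eta> t) \<and> mono \<eta>"

definition alpha_HUCL :: "'a measure \<Rightarrow> (real \<Rightarrow> real) \<Rightarrow> ('a \<Rightarrow> 'a \<Rightarrow> real) \<Rightarrow> 'a \<Rightarrow> real" where
  "alpha_HUCL q \<eta> g x = (\<integral>x'. \<eta> (g x x') \<partial>q)"

definition alpha_HSCL :: "'a measure \<Rightarrow> ('a \<Rightarrow> 'b) \<Rightarrow> (real \<Rightarrow> real) \<Rightarrow> ('a \<Rightarrow> 'a \<Rightarrow> real) \<Rightarrow> 'a \<Rightarrow> real" where
  "alpha_HSCL q y \<eta> g x = (\<integral>x'. of_bool (y x' \<noteq> y x) * \<eta> (g x x') \<partial>q)"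

definition alpha_Hcol :: "'a measure \<Rightarrow> ('a \<Rightarrow> 'b) \<Rightarrow> (real \<Rightarrow> real) \<Rightarrow> ('a \<Rightarrow> 'a \<Rightarrow> real) \<Rightarrow> 'a \<Rightarrow> real" where
  "alpha_Hcol q y \<eta> g x = (\<integral>x'. of_bool (y x' = y x) * \<eta> (g x x') \<partial>q)"

definition q_HUCL :: "'a measure \<Rightarrow> (real \<Rightarrow> real) \<Rightarrow> ('a \<Rightarrow> 'a \<Rightarrow> real) \<Rightarrow> 'a \<Rightarrow> 'a measure" where
  "q_HUCL q \<eta> g x = density q (\<lambda>x'. ennreal (\<eta> (g x x') / alpha_HUCL q \<eta> g x))"

definition q_HSCL :: "'a measure \<Rightarrow> ('a \<Rightarrow> 'b) \<Rightarrow> (real \<Rightarrow> real) \<Rightarrow> ('a \<Rightarrow> 'a \<Rightarrow> real) \<Rightarrow> 'a \<Rightarrow> 'a measure" where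
  "q_HSCL q y \<eta> g x = density q (\<lambda>x'. ennreal (of_bool (y x' \<noteq> y x) * \<eta> (g x x') / alpha_HSCL q y \<eta> g x))"

definition q_Hcol :: "'a measure \<Rightarrow> ('a \<Rightarrow> 'b) \<Rightarrow> (real \<Rightarrow> real) \<Rightarrow> ('a \<Rightarrow> 'a \<Rightarrow> real) \<Rightarrow> 'a \<Rightarrow> 'a measure" where
  "q_Hcol q y \<eta> g x = density q (\<lambda>x'. ennreal (of_bool (y x' = y x) * \<eta> (g x x') / alpha_Hcol q y \<eta> g x))"

definition InfoNCE_inf :: "('a \<times> 'a) measure \<Rightarrow> ('a \<Rightarrow> 'a \<Rightarrow> real) \<Rightarrow> ('a \<Rightarrow> 'a measure) \<Rightarrow> real" where
  "InfoNCE_inf p g Q = (\<integral>z. ln (1 + exp (- g (fst z) (snd z)) * (\<integral>x'. exp (g (fst z) x') \<partial>(Q (fst z)))) \<partial>p)"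

end

theory Submission
  imports Defs
begin

text \<open>Under each of the three tilted distributions, the mean of a test function e is an
  \<eta>(g)-weighted mean of e under q_UCL, with weights restricted to negatives of a different
  label (H-SCL), of the same label (Hcol), or unrestricted (H-UCL). The H-UCL weights are the sum
  of the other two, so the H-UCL mean of exp g is the mediant of the H-SCL and Hcol means and
  therefore, by hypothesis, at least the H-SCL mean. As t \<mapsto> log (1 + exp (-g) t) is increasing,
  the InfoNCE integrand of H-UCL dominates that of H-SCL pointwise; since f takes unit values,
  g is bounded by 1/\<gamma> and all integrands are bounded, hence integrable.\<close>

definition weighted_mean :: "'a measure \<Rightarrow> ('a \<Rightarrow> real) \<Rightarrow> ('a \<Rightarrow> real) \<Rightarrow> real" where
  "weighted_mean Q h e = (\<integral>x. h x * e x \<partial>Q) / (\<integral>x. h x \<partial>Q)"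

lemma le_mediant:
  fixes a b c d :: real
  assumes "0 < c" "0 < d" "a / c \<le> b / d"
  shows "a / c \<le> (a + b) / (c + d)"
proof -
  have "a * d \<le> b * c" using assms by (simp add: divide_simps)
  then show ?thesis using assms by (simp add: divide_simps algebra_simps)
qed

lemma integrable_mult_bounded:
  fixes h e :: "'a \<Rightarrow> real"
  assumes "integrable Q h" "e \<in> borel_measurable Q" "\<forall>x\<in>space Q. \<bar>e x\<bar> \<le> B"
  shows "integrable Q (\<lambda>x. h x * e x)"
proof (rule Bochner_Integration.integrable_bound[of _ "\<lambda>x. B * h x"])
  show "integrable Q (\<lambda>x. B * h x)" using assms(1) by simp
  show "(\<lambda>x. h x * e x) \<in> borel_measurable Q" using assms(1,2) by measurable
  show "AE x in Q. norm (h x * e x) \<le> norm (B * h x)"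
  proof (intro AE_I2)
    fix x assume "x \<in> space Q"
    then have "\<bar>e x\<bar> \<le> \<bar>B\<bar>" using assms(3) by fastforce
    then show "norm (h x * e x) \<le> norm (B * h x)"
      by (simp add: abs_mult mult.commute[of "\<bar>B\<bar>"] mult_left_mono)
  qed
qed

lemma integral_split_pred:
  fixes f :: "'a \<Rightarrow> real"
  assumes "integrable Q f" "Measurable.pred Q P"
  shows "(\<integral>x. f x \<partial>Q) = (\<integral>x. of_bool (\<not> P x) * f x \<partial>Q) + (\<integral>x. of_bool (P x) * f x \<partial>Q)"
proof -
  have "integrable Q (\<lambda>x. of_bool (R x) * f x)" if "Measurable.pred Q R" for R
    using integrable_mult_bounded[OF assms(1), of "\<lambda>x. of_bool (R x)" 1] that
    by (simp add: mult.commute)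
  moreover have "(\<integral>x. f x \<partial>Q) = (\<integral>x. of_bool (\<not> P x) * f x + of_bool (P x) * f x \<partial>Q)"
    by (rule Bochner_Integration.integral_cong) auto
  ultimately show ?thesis using assms(2) by simp
qed

lemma integral_normalized_density:
  fixes h e :: "'a \<Rightarrow> real"
  assumes "h \<in> borel_measurable Q" "e \<in> borel_measurable Q" "\<forall>x\<in>space Q. 0 \<le> h x"
  shows "(\<integral>x. e x \<partial>density Q (\<lambda>x. ennreal (h x / (\<integral>x. h x \<partial>Q)))) = weighted_mean Q h e"
proof -
  have "0 \<le> (\<integral>x. h x \<partial>Q)" using assms(3) by (intro integral_nonneg_AE AE_I2) auto
  then have "(\<integral>x. e x \<partial>density Q (\<lambda>x. ennreal (h x / (\<integral>x. h x \<partial>Q))))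
      = (\<integral>x. h x * e x / (\<integral>x. h x \<partial>Q) \<partial>Q)"
    using assms by (subst integral_density) (auto intro!: AE_I2)
  then show ?thesis by (simp add: weighted_mean_def)
qed

lemma weighted_mean_le_bound:
  fixes h e :: "'a \<Rightarrow> real"
  assumes "integrable Q (\<lambda>x. h x * e x)" "integrable Q h" "0 < (\<integral>x. h x \<partial>Q)"
    and "\<forall>x\<in>space Q. 0 \<le> h x \<and> e x \<le> B"
  shows "weighted_mean Q h e \<le> B"
proof -
  have "(\<integral>x. h x * e x \<partial>Q) \<le> (\<integral>x. B * h x \<partial>Q)"
    using assms(1,2,4) by (intro integral_mono) (auto simp: mult.commute intro: mult_right_mono)
  then show ?thesis using assms(3) by (simp add: weighted_mean_def divide_le_eq)
qed

lemma weighted_mean_le_mixture: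
  fixes h e :: "'a \<Rightarrow> real"
  assumes "integrable Q (\<lambda>x. h x * e x)" "integrable Q h" "Measurable.pred Q P"
    and "0 < (\<integral>x. of_bool (\<not> P x) * h x \<partial>Q)" "0 < (\<integral>x. of_bool (P x) * h x \<partial>Q)"
    and "weighted_mean Q (\<lambda>x. of_bool (\<not> P x) * h x) e \<le> weighted_mean Q (\<lambda>x. of_bool (P x) * h x) e"
  shows "weighted_mean Q (\<lambda>x. of_bool (\<not> P x) * h x) e \<le> weighted_mean Q h e"
  using le_mediant[OF assms(4-5)] assms(6)
  unfolding weighted_mean_def integral_split_pred[OF assms(2,3)] integral_split_pred[OF assms(1,3)]
  by (simp add: mult.assoc)

lemma borel_measurable_weighted_mean:
  assumes "sigma_finite_measure Q"
    and "case_prod h \<in> borel_measurable (N \<Otimes>\<^sub>M Q)" "case_prod e \<in> borel_measurable (N \<Otimes>\<^sub>M Q)"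
  shows "(\<lambda>x. weighted_mean Q (h x) (e x)) \<in> borel_measurable N"
proof -
  interpret sigma_finite_measure Q by fact
  show ?thesis unfolding weighted_mean_def using assms(2,3) by measurable
qed

lemma abs_sim_le:
  assumes "norm (f x) = 1" "norm (f x') = 1" "0 < \<gamma>"
  shows "\<bar>sim f \<gamma> x x'\<bar> \<le> 1 / \<gamma>"
proof -
  have "\<bar>inner (f x) (f x')\<bar> \<le> 1"
    using Cauchy_Schwarz_ineq2[of "f x" "f x'"] assms(1,2) by simp
  then show ?thesis using assms(3) by (simp add: sim_def abs_div divide_right_mono)
qed

lemma integral_q_HUCL:
  assumes "\<eta> \<in> borel_measurable borel" "\<forall>t. 0 \<le> \<eta> t"
    and "g x \<in> borel_measurable q" "e \<in> borel_measurable q"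
  shows "(\<integral>x'. e x' \<partial>q_HUCL q \<eta> g x) = weighted_mean q (\<lambda>x'. \<eta> (g x x')) e"
  unfolding q_HUCL_def alpha_HUCL_def using assms
  by (intro integral_normalized_density) auto

lemma integral_q_HSCL:
  assumes "\<eta> \<in> borel_measurable borel" "\<forall>t. 0 \<le> \<eta> t"
    and "g x \<in> borel_measurable q" "e \<in> borel_measurable q" "Measurable.pred q (\<lambda>x'. y x' = y x)"
  shows "(\<integral>x'. e x' \<partial>q_HSCL q y \<eta> g x)
    = weighted_mean q (\<lambda>x'. of_bool (y x' \<noteq> y x) * \<eta> (g x x')) e"
  unfolding q_HSCL_def alpha_HSCL_def
proof (rule integral_normalized_density)
  show "(\<lambda>x'. of_bool (y x' \<noteq> y x) * \<eta> (g x x')) \<in> borel_measurable q"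
    using assms by measurable
qed (use assms in auto)

lemma integral_q_Hcol:
  assumes "\<eta> \<in> borel_measurable borel" "\<forall>t. 0 \<le> \<eta> t"
    and "g x \<in> borel_measurable q" "e \<in> borel_measurable q" "Measurable.pred q (\<lambda>x'. y x' = y x)"
  shows "(\<integral>x'. e x' \<partial>q_Hcol q y \<eta> g x)
    = weighted_mean q (\<lambda>x'. of_bool (y x' = y x) * \<eta> (g x x')) e"
  unfolding q_Hcol_def alpha_Hcol_def
proof (rule integral_normalized_density)
  show "(\<lambda>x'. of_bool (y x' = y x) * \<eta> (g x x')) \<in> borel_measurable q"
    using assms by measurable
qed (use assms in auto)

lemma integral_q_HUCL_le_bound:
  fixes e :: "'a \<Rightarrow> real"
  assumes "\<eta> \<in> borel_measurable borel" "\<forall>t. 0 \<le> \<eta> t"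
    and "g x \<in> borel_measurable q" "e \<in> borel_measurable q"
    and "0 < alpha_HUCL q \<eta> g x" "\<forall>x'\<in>space q. \<bar>e x'\<bar> \<le> B"
  shows "(\<integral>x'. e x' \<partial>q_HUCL q \<eta> g x) \<le> B"
proof -
  have "integrable q (\<lambda>x'. \<eta> (g x x'))"
    using assms(5) not_integrable_integral_eq unfolding alpha_HUCL_def by force
  then show ?thesis
    using assms(2,4-6) integrable_mult_bounded[OF _ assms(4,6)]
    unfolding integral_q_HUCL[where g = g and x = x, OF assms(1-4)] alpha_HUCL_def
    by (intro weighted_mean_le_bound) auto
qed

lemma integral_q_HSCL_le_q_HUCL:
  fixes e :: "'a \<Rightarrow> real"
  assumes "\<eta> \<in> borel_measurable borel" "\<forall>t. 0 \<le> \<eta> t"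
    and "g x \<in> borel_measurable q" "e \<in> borel_measurable q" "Measurable.pred q (\<lambda>x'. y x' = y x)"
    and "\<forall>x'\<in>space q. \<bar>e x'\<bar> \<le> B"
    and "0 < alpha_HUCL q \<eta> g x" "0 < alpha_HSCL q y \<eta> g x" "0 < alpha_Hcol q y \<eta> g x"
    and "(\<integral>x'. e x' \<partial>q_HSCL q y \<eta> g x) \<le> (\<integral>x'. e x' \<partial>q_Hcol q y \<eta> g x)"
  shows "(\<integral>x'. e x' \<partial>q_HSCL q y \<eta> g x) \<le> (\<integral>x'. e x' \<partial>q_HUCL q \<eta> g x)"
proof -
  have "integrable q (\<lambda>x'. \<eta> (g x x'))"
    using assms(7) not_integrable_integral_eq unfolding alpha_HUCL_def by force
  then show ?thesis
    using assms(5,8-10) integrable_mult_bounded[OF _ assms(4,6)]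
    unfolding integral_q_HUCL[where g = g and x = x, OF assms(1-4)]
      integral_q_HSCL[where g = g and x = x, OF assms(1-5)]
      integral_q_Hcol[where g = g and x = x, OF assms(1-5)] alpha_HSCL_def alpha_Hcol_def
    by (intro weighted_mean_le_mixture[where P = "\<lambda>x'. y x' = y x"]) auto
qed

lemma borel_measurable_integral_q_HUCL:
  fixes e :: "'a \<Rightarrow> 'a \<Rightarrow> real"
  assumes "sigma_finite_measure q" "sets q = sets M"
    and "\<eta> \<in> borel_measurable borel" "\<forall>t. 0 \<le> \<eta> t"
    and "case_prod g \<in> borel_measurable (M \<Otimes>\<^sub>M M)" "case_prod e \<in> borel_measurable (M \<Otimes>\<^sub>M M)"
  shows "(\<lambda>x. \<integral>x'. e x x' \<partial>q_HUCL q \<eta> g x) \<in> borel_measurable M"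
proof -
  have sets_Mq: "sets (M \<Otimes>\<^sub>M q) = sets (M \<Otimes>\<^sub>M M)"
    using assms(2) by (rule sets_pair_measure_cong[OF refl])
  have "(\<lambda>(x, x'). \<eta> (g x x')) \<in> borel_measurable (M \<Otimes>\<^sub>M q)"
    "case_prod e \<in> borel_measurable (M \<Otimes>\<^sub>M q)"
    unfolding measurable_cong_sets[OF sets_Mq refl] using assms(3,5,6) by measurable
  then have "(\<lambda>x. weighted_mean q (\<lambda>x'. \<eta> (g x x')) (e x)) \<in> borel_measurable M"
    by (rule borel_measurable_weighted_mean[OF assms(1)])
  moreover have "(\<integral>x'. e x x' \<partial>q_HUCL q \<eta> g x) = weighted_mean q (\<lambda>x'. \<eta> (g x x')) (e x)"
    if "x \<in> space M" for x
    using that assms(3-6)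
    by (intro integral_q_HUCL) (simp_all add: measurable_cong_sets[OF assms(2) refl])
  ultimately show ?thesis by (simp cong: measurable_cong)
qed

lemma InfoNCE_inf_mono:
  fixes p :: "('a \<times> 'a) measure" and g :: "'a \<Rightarrow> 'a \<Rightarrow> real"
  assumes "prob_space p" "sets p = sets (M \<Otimes>\<^sub>M M)"
    and "case_prod g \<in> borel_measurable (M \<Otimes>\<^sub>M M)"
    and "(\<lambda>x. \<integral>x'. exp (g x x') \<partial>Q2 x) \<in> borel_measurable M"
    and "\<forall>x\<in>space M. \<forall>x'\<in>space M. \<bar>g x x'\<bar> \<le> c"
    and "\<forall>x\<in>space M. (\<integral>x'. exp (g x x') \<partial>Q1 x) \<le> (\<integral>x'. exp (g x x') \<partial>Q2 x)"
    and "\<forall>x\<in>space M. (\<integral>x'. exp (g x x') \<partial>Q2 x) \<le> B"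
  shows "InfoNCE_inf p g Q1 \<le> InfoNCE_inf p g Q2"
proof -
  interpret prob_space p by fact
  define J where "J Q x = (\<integral>x'. exp (g x x') \<partial>Q x)" for Q x
  define F where "F Q z = ln (1 + exp (- g (fst z) (snd z)) * J Q (fst z))" for Q z
  have F_bounds: "0 \<le> F Q1 z \<and> F Q1 z \<le> F Q2 z \<and> F Q2 z \<le> exp c * B" if "z \<in> space p" for z
  proof -
    have z: "fst z \<in> space M" "snd z \<in> space M"
      using that unfolding sets_eq_imp_space_eq[OF assms(2)] space_pair_measure by auto
    have "\<bar>g (fst z) (snd z)\<bar> \<le> c" using assms(5) z by blast
    then have e: "exp (- g (fst z) (snd z)) \<le> exp c" by (simp add: abs_le_iff)
    have J: "0 \<le> J Q1 (fst z)" "J Q1 (fst z) \<le> J Q2 (fst z)" "J Q2 (fst z) \<le> B"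
      using assms(6,7) z(1) unfolding J_def by (blast intro: integral_nonneg_AE AE_I2 exp_ge_zero)+
    define u where "u Q = exp (- g (fst z) (snd z)) * J Q (fst z)" for Q
    have u: "0 \<le> u Q1" "u Q1 \<le> u Q2" "u Q2 \<le> exp c * B"
      unfolding u_def using e J by (auto intro: mult_left_mono mult_mono)
    have "0 \<le> ln (1 + u Q1)" "ln (1 + u Q1) \<le> ln (1 + u Q2)"
      using u by simp_all
    moreover have "ln (1 + u Q2) \<le> u Q2"
      using u by (intro ln_add_one_self_le_self) simp
    ultimately show ?thesis unfolding F_def u_def[symmetric] using u(3) by linarith
  qed
  have "J Q2 \<in> borel_measurable M" using assms(4) unfolding J_def .
  then have "F Q2 \<in> borel_measurable p"
    unfolding F_def measurable_cong_sets[OF assms(2) refl] using assms(3) by measurable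
  moreover have "norm (F Q2 z) \<le> exp c * B" if "z \<in> space p" for z
    using F_bounds[OF that] by simp
  ultimately have "integrable p (F Q2)"
    by (intro integrable_const_bound[where B = "exp c * B"] AE_I2)
  \<comment> \<open>No measurability of F Q1 is needed: a non-integrable function has integral 0.\<close>
  then have "(\<integral>z. F Q1 z \<partial>p) \<le> (\<integral>z. F Q2 z \<partial>p)"
    using F_bounds by (intro integral_mono_AE' AE_I2) (fastforce intro: order_trans)+
  then show ?thesis unfolding InfoNCE_inf_def F_def J_def .
qed

theorem lemma1:
  fixes M :: "'a measure" and p_sim :: "('a \<times> 'a) measure" and q_UCL :: "'a measure"
    and y :: "'a \<Rightarrow> 'b" and f :: "'a \<Rightarrow> 'v::euclidean_space"
    and \<gamma> :: real and \<eta> :: "real \<Rightarrow> real"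
  assumes "prob_space p_sim" and "sets p_sim = sets (M \<Otimes>\<^sub>M M)"
    and "prob_space q_UCL" and "sets q_UCL = sets M"
    and "f \<in> borel_measurable M"
    and "{z \<in> space (M \<Otimes>\<^sub>M M). y (fst z) = y (snd z)} \<in> sets (M \<Otimes>\<^sub>M M)"
    and "\<forall>x \<in> space M. norm (f x) = 1"
    and "0 < \<gamma>"
    and "hardening \<eta>"
    and "\<forall>x \<in> space M. 0 < alpha_HUCL q_UCL \<eta> (sim f \<gamma>) x"
    and "\<forall>x \<in> space M. 0 < alpha_HSCL q_UCL y \<eta> (sim f \<gamma>) x"
    and "\<forall>x \<in> space M. 0 < alpha_Hcol q_UCL y \<eta> (sim f \<gamma>) x"
    and "\<forall>x \<in> space M.
           (\<integral>x'. exp (sim f \<gamma> x x') \<partial>(q_Hcol q_UCL y \<eta> (sim f \<gamma>) x))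
         \<ge> (\<integral>x'. exp (sim f \<gamma> x x') \<partial>(q_HSCL q_UCL y \<eta> (sim f \<gamma>) x))"
  shows "InfoNCE_inf p_sim (sim f \<gamma>) (q_HUCL q_UCL \<eta> (sim f \<gamma>))
         \<ge> InfoNCE_inf p_sim (sim f \<gamma>) (q_HSCL q_UCL y \<eta> (sim f \<gamma>))"
proof -
  have \<eta>: "\<eta> \<in> borel_measurable borel" "\<forall>t. 0 \<le> \<eta> t"
    using \<open>hardening \<eta>\<close> by (auto simp: hardening_def intro: borel_measurable_mono)
  have sim_meas: "case_prod (sim f \<gamma>) \<in> borel_measurable (M \<Otimes>\<^sub>M M)"
    "(\<lambda>(x, x'). exp (sim f \<gamma> x x')) \<in> borel_measurable (M \<Otimes>\<^sub>M M)"
    using \<open>f \<in> borel_measurable M\<close> unfolding sim_def by measurable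
  have sim_bound: "\<forall>x\<in>space M. \<forall>x'\<in>space M. \<bar>sim f \<gamma> x x'\<bar> \<le> 1 / \<gamma>"
    using assms(7,8) by (auto intro: abs_sim_le)
  have space_q: "space q_UCL = space M"
    using \<open>sets q_UCL = sets M\<close> by (rule sets_eq_imp_space_eq)
  have slice_meas: "sim f \<gamma> x \<in> borel_measurable q_UCL" if "x \<in> space M" for x
    using measurable_compose[OF measurable_Pair1'[OF that] sim_meas(1)]
    by (simp add: measurable_cong_sets[OF \<open>sets q_UCL = sets M\<close> refl])
  have exp_meas: "(\<lambda>x'. exp (sim f \<gamma> x x')) \<in> borel_measurable q_UCL" if "x \<in> space M" for x
    using slice_meas[OF that] by measurable
  have slice_pred: "Measurable.pred q_UCL (\<lambda>x'. y x' = y x)" if "x \<in> space M" for x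
    using pred_sets1[OF assms(6) measurable_Pair1'[OF that]]
    by (simp add: measurable_cong_sets[OF \<open>sets q_UCL = sets M\<close> refl] eq_commute)
  have sim_le: "sim f \<gamma> x x' \<le> 1 / \<gamma>" if "x \<in> space M" "x' \<in> space q_UCL" for x x'
    using sim_bound that by (simp add: space_q abs_le_iff)
  have "\<forall>x\<in>space M. (\<integral>x'. exp (sim f \<gamma> x x') \<partial>q_HSCL q_UCL y \<eta> (sim f \<gamma>) x)
      \<le> (\<integral>x'. exp (sim f \<gamma> x x') \<partial>q_HUCL q_UCL \<eta> (sim f \<gamma>) x)"
    using assms(10-13) \<eta>
    by (intro ballI integral_q_HSCL_le_q_HUCL[where B = "exp (1 / \<gamma>)"])
      (simp_all add: slice_meas exp_meas slice_pred sim_le)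
  moreover have
    "\<forall>x\<in>space M. (\<integral>x'. exp (sim f \<gamma> x x') \<partial>q_HUCL q_UCL \<eta> (sim f \<gamma>) x) \<le> exp (1 / \<gamma>)"
    using assms(10) \<eta>
    by (intro ballI integral_q_HUCL_le_bound[where B = "exp (1 / \<gamma>)"])
      (simp_all add: slice_meas exp_meas sim_le)
  moreover have
    "(\<lambda>x. \<integral>x'. exp (sim f \<gamma> x x') \<partial>q_HUCL q_UCL \<eta> (sim f \<gamma>) x) \<in> borel_measurable M"
    using prob_space_imp_sigma_finite[OF assms(3)] assms(4) \<eta> sim_meas
    by (rule borel_measurable_integral_q_HUCL)
  ultimately show ?thesis
    using InfoNCE_inf_mono[OF assms(1,2) sim_meas(1) _ sim_bound] by blast
qed

end
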